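(* Let $p\ge 1$ and let $\hat\lambda_1,\ldots,\hat\lambda_p$ be mutually distinct complex numbers lying in the open left half-plane $\{s\in\mathbb{C}:\operatorname{Re}s<0\}$, such that the set $\{\hat\lambda_1,\ldots,\hat\lambda_p\}$ is closed under complex conjugation. Define $$\beta_j=\frac{\prod_{l=1}^{p}(\hat\lambda_j+\hat\lambda_l)}{\prod_{l=1,\,l\neq j}^{p}(\hat\lambda_j-\hat\lambda_l)},\qquad j=1,\ldots,p,$$ and $$\widehat d(s)=1+\sum_{j=1}^{p}\frac{\beta_j}{s-\hat\lambda_j}.$$ Then $|\widehat d(\mathrm{i}\omega)|=1$ for every $\omega\in\mathbb{R}$ (where $\mathrm{i}=\sqrt{-1}$). Consequently, for any sampling nodes $\xi_1,\ldots,\xi_\ell$ on the imaginary axis, the diagonal scaling matrix $\widehat\Delta=\mathrm{diag}\big(1/|\widehat d(\xi_i)|\big)_{i=1}^{\ell}$ is unitary, so for any matrix $\mathcal{A}\in\mathbb{C}^{\ell\times m}$ and vector $h\in\mathbb{C}^{\ell}$ the weighted least-squares problem $\min_x\|\widehat\Delta(\mathcal{A}x-h)\|_2$ has the same solutions as the unweighted problem $\min_x\|\mathcal{A}x-h\|_2$.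
   Context: This arises in Vector Fitting, where a rational approximant is written in barycentric form $\widehat n(s)/\widehat d(s)$ with poles (nodes) $\hat\lambda_j$, and each iteration solves a least-squares problem whose rows are weighted by $1/|\widehat d(\xi_i)|$ at the sampling nodes $\xi_i$. The $\hat\lambda_j$ here are the mirror images $-\lambda$ of unstable poles $\lambda$ (poles in the open right half-plane) of the current denominator; the $\beta_j$ are chosen so that the zeros of $\widehat d$ are the original unstable poles $-\hat\lambda_j$. *)

theory Defs
  imports "HOL-Analysis.Analysis"
begin

definition vf_beta :: "nat \<Rightarrow> (nat \<Rightarrow> complex) \<Rightarrow> nat \<Rightarrow> complex" where
  "vf_beta p lam j =
     (\<Prod>l\<in>{1..p}. lam j + lam l) / (\<Prod>l\<in>{1..p} - {j}. lam j - lam l)"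

definition vf_dhat :: "nat \<Rightarrow> (nat \<Rightarrow> complex) \<Rightarrow> complex \<Rightarrow> complex" where
  "vf_dhat p lam s = 1 + (\<Sum>j\<in>{1..p}. vf_beta p lam j / (s - lam j))"

text \<open>Matrices / vectors of size l x m are represented as functions on indices
  0..<l, 0..<m.\<close>

definition unitary_nat_mat :: "nat \<Rightarrow> (nat \<Rightarrow> nat \<Rightarrow> complex) \<Rightarrow> bool" where
  "unitary_nat_mat n U \<longleftrightarrow>
     (\<forall>i<n. \<forall>k<n. (\<Sum>j<n. cnj (U j i) * U j k) = (if i = k then 1 else 0))"

definition vec_norm2 :: "nat \<Rightarrow> (nat \<Rightarrow> complex) \<Rightarrow> real" where
  "vec_norm2 n v = sqrt (\<Sum>i<n. (cmod (v i))\<^sup>2)"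

definition mat_vec :: "nat \<Rightarrow> (nat \<Rightarrow> nat \<Rightarrow> complex) \<Rightarrow> (nat \<Rightarrow> complex) \<Rightarrow> nat \<Rightarrow> complex" where
  "mat_vec m A x = (\<lambda>i. \<Sum>k<m. A i k * x k)"

definition vf_Delta :: "nat \<Rightarrow> (nat \<Rightarrow> complex) \<Rightarrow> (nat \<Rightarrow> complex) \<Rightarrow> nat \<Rightarrow> nat \<Rightarrow> complex" where
  "vf_Delta p lam xi i k = (if i = k then complex_of_real (1 / cmod (vf_dhat p lam (xi i))) else 0)"

definition lsq_solutions ::
  "nat \<Rightarrow> nat \<Rightarrow> (nat \<Rightarrow> nat \<Rightarrow> complex) \<Rightarrow> (nat \<Rightarrow> nat \<Rightarrow> complex) \<Rightarrow> (nat \<Rightarrow> complex)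
     \<Rightarrow> (nat \<Rightarrow> complex) set" where
  "lsq_solutions l m W A h =
     {x. (\<forall>k\<ge>m. x k = 0) \<and>
         (\<forall>y. (\<forall>k\<ge>m. y k = 0) \<longrightarrow>
           vec_norm2 l (mat_vec l W (\<lambda>i. mat_vec m A x i - h i))
             \<le> vec_norm2 l (mat_vec l W (\<lambda>i. mat_vec m A y i - h i)))}"

definition id_nat_mat :: "nat \<Rightarrow> nat \<Rightarrow> complex" where
  "id_nat_mat i k = (if i = k then 1 else 0)"

end

theory Submission
  imports Defs "HOL-Computational_Algebra.Polynomial"
begin

text \<open>The partial fraction sum collapses to the quotient
  \<open>\<Prod>(s + \<lambda>\<^sub>l) / \<Prod>(s - \<lambda>\<^sub>l)\<close>: the \<open>\<beta>\<^sub>j\<close> are exactly its residues, since both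
  numerator polynomials are monic of degree \<open>p\<close> and agree at the \<open>p\<close> nodes. On the
  imaginary axis \<open>|s - \<lambda>| = |s + cnj \<lambda>|\<close>, so closedness of the nodes under
  conjugation makes numerator and denominator equal in modulus. The scaling
  matrix is then the identity on the sampling indices.\<close>

lemma prod_plus_nodes_eq_partial_fraction:
  fixes lam :: "nat \<Rightarrow> complex"
  assumes inj: "inj_on lam {1..p}"
  shows "(\<Prod>l\<in>{1..p}. [:lam l, 1:])
       = (\<Prod>l\<in>{1..p}. [:- lam l, 1:])
         + (\<Sum>j\<in>{1..p}. smult (vf_beta p lam j) (\<Prod>l\<in>{1..p}-{j}. [:- lam l, 1:]))"
    (is "?A = ?B + ?L")
proof (rule poly_eqI_degree_lead_coeff[of _ p _ "lam ` {1..p}"])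
  have deg_A: "degree ?A = p" and deg_B: "degree ?B = p"
    by (subst degree_prod_eq_sum_degree; simp)+
  have deg_L: "degree ?L < p \<or> ?L = 0"
  proof (cases "p = 0")
    case True
    then show ?thesis by simp
  next
    case False
    have "degree (\<Prod>l\<in>{1..p}-{j}. [:- lam l, 1:]) = p - 1" if "j \<in> {1..p}" for j
      using that by (subst degree_prod_eq_sum_degree) auto
    then have "degree (smult c (\<Prod>l\<in>{1..p}-{j}. [:- lam l, 1:])) \<le> p - 1"
      if "j \<in> {1..p}" for c j
      using that by (metis degree_smult_le)
    then have "degree ?L \<le> p - 1"
      by (intro degree_sum_le) simp_all
    with False show ?thesis by auto
  qed
  have "coeff ?A p = 1"
    using deg_A lead_coeff_prod[of "\<lambda>l. [:lam l, 1:]" "{1..p}"] by simp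
  moreover have "coeff (?B + ?L) p = 1"
    using deg_B deg_L lead_coeff_prod[of "\<lambda>l. [:- lam l, 1:]" "{1..p}"]
    by (auto intro: coeff_eq_0)
  ultimately show "coeff ?A p = coeff (?B + ?L) p" by simp
  show "degree ?A \<le> p" "degree (?B + ?L) \<le> p"
    using deg_A deg_B deg_L by (auto intro: degree_add_le)
  show "card (lam ` {1..p}) \<ge> p"
    using card_image[OF inj] by simp
  show "poly ?A z = poly (?B + ?L) z" if "z \<in> lam ` {1..p}" for z
  proof -
    from that obtain k where k: "k \<in> {1..p}" "z = lam k" by (rule imageE)
    define Q where "Q j = smult (vf_beta p lam j) (\<Prod>l\<in>{1..p}-{j}. [:- lam l, 1:])" for j
    have "poly ?B (lam k) = 0"
      unfolding poly_prod using k by (intro prod_zero) auto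
    have "poly (Q j) (lam k) = 0" if "j \<in> {1..p} - {k}" for j
      unfolding Q_def poly_smult poly_prod using k that
      by (subst prod_zero) (auto intro!: bexI[of _ k])
    then have "poly ?L (lam k) = poly (Q k) (lam k)"
      unfolding Q_def[symmetric] sum.remove[OF finite_atLeastAtMost k(1)] by (simp add: poly_sum)
    also have "\<dots> = vf_beta p lam k * (\<Prod>l\<in>{1..p}-{k}. lam k - lam l)"
      unfolding Q_def poly_smult poly_prod by simp
    also have "\<dots> = (\<Prod>l\<in>{1..p}. lam k + lam l)"
    proof -
      have "(\<Prod>l\<in>{1..p}-{k}. lam k - lam l) \<noteq> 0"
        using inj_on_eq_iff[OF inj k(1)] by (simp add: prod_zero_iff)
      then show ?thesis unfolding vf_beta_def by simp
    qed
    finally have "poly ?L (lam k) = (\<Prod>l\<in>{1..p}. lam k + lam l)" .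
    moreover have "poly ?A (lam k) = (\<Prod>l\<in>{1..p}. lam k + lam l)"
      by (simp add: poly_prod add.commute)
    ultimately show ?thesis
      using \<open>poly ?B (lam k) = 0\<close> unfolding k(2) poly_add by (simp only: add_0_left)
  qed
qed

lemma vf_dhat_eq_prod_quotient:
  assumes inj: "inj_on lam {1..p}" and s: "s \<notin> lam ` {1..p}"
  shows "vf_dhat p lam s = (\<Prod>l\<in>{1..p}. s + lam l) / (\<Prod>l\<in>{1..p}. s - lam l)"
proof -
  define B where "B = (\<Prod>l\<in>{1..p}. s - lam l)"
  have B_nz: "B \<noteq> 0" using s by (auto simp: B_def)
  have summand: "vf_beta p lam j * (\<Prod>l\<in>{1..p}-{j}. s - lam l) = B * (vf_beta p lam j / (s - lam j))"
    if "j \<in> {1..p}" for j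
  proof -
    have "B = (s - lam j) * (\<Prod>l\<in>{1..p}-{j}. s - lam l)"
      unfolding B_def by (rule prod.remove[OF _ that]) simp
    moreover have "s - lam j \<noteq> 0" using s that by auto
    ultimately show ?thesis by simp
  qed
  have "(\<Prod>l\<in>{1..p}. s + lam l)
      = B + (\<Sum>j\<in>{1..p}. vf_beta p lam j * (\<Prod>l\<in>{1..p}-{j}. s - lam l))"
    using arg_cong[OF prod_plus_nodes_eq_partial_fraction[OF inj], of "\<lambda>q. poly q s"]
    by (simp add: poly_prod poly_sum B_def add.commute)
  also have "\<dots> = B + (\<Sum>j\<in>{1..p}. B * (vf_beta p lam j / (s - lam j)))"
    by (rule arg_cong[where f = "(+) B"], rule sum.cong[OF refl], rule summand)
  also have "\<dots> = B * vf_dhat p lam s"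
    by (simp add: vf_dhat_def distrib_left sum_distrib_left)
  finally show ?thesis using B_nz by (simp add: B_def field_simps)
qed

lemma prod_norm_diff_eq_prod_norm_add_imaginary:
  fixes T :: "complex set"
  assumes "finite T" and cnj_closed: "\<forall>x\<in>T. cnj x \<in> T" and "Re s = 0"
  shows "(\<Prod>x\<in>T. cmod (s - x)) = (\<Prod>x\<in>T. cmod (s + x))"
proof -
  have cnj_T: "cnj ` T = T"
    using assms(1) cnj_closed
    by (intro card_subset_eq card_image) (auto intro: inj_onI)
  have "cmod (s - x) = cmod (s + cnj x)" for x
  proof -
    have "cnj (s - x) = - (s + cnj x)"
      using \<open>Re s = 0\<close> by (simp add: complex_eq_iff)
    then show ?thesis
      by (metis complex_mod_cnj norm_minus_cancel)
  qed
  then have "(\<Prod>x\<in>T. cmod (s - x)) = (\<Prod>x\<in>cnj ` T. cmod (s + x))"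
    by (subst prod.reindex) (auto intro: inj_onI)
  then show ?thesis using cnj_T by simp
qed

lemma norm_vf_dhat_imaginary:
  assumes inj: "inj_on lam {1..p}"
    and stable: "\<forall>j\<in>{1..p}. Re (lam j) < 0"
    and cnj_closed: "\<forall>j\<in>{1..p}. cnj (lam j) \<in> lam ` {1..p}"
    and "Re s = 0"
  shows "cmod (vf_dhat p lam s) = 1"
proof -
  have s: "s \<notin> lam ` {1..p}" using stable \<open>Re s = 0\<close> by fastforce
  have "(\<Prod>x\<in>lam ` {1..p}. cmod (s - x)) = (\<Prod>x\<in>lam ` {1..p}. cmod (s + x))"
    using cnj_closed \<open>Re s = 0\<close> by (intro prod_norm_diff_eq_prod_norm_add_imaginary) auto
  then have "(\<Prod>l\<in>{1..p}. cmod (s - lam l)) = (\<Prod>l\<in>{1..p}. cmod (s + lam l))"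
    by (simp only: prod.reindex[OF inj] comp_def)
  moreover have "(\<Prod>l\<in>{1..p}. cmod (s - lam l)) \<noteq> 0" using s by auto
  ultimately show ?thesis
    by (simp add: vf_dhat_eq_prod_quotient[OF inj s] norm_divide prod_norm)
qed

lemma unitary_nat_mat_cong:
  assumes "\<And>i k. i < n \<Longrightarrow> k < n \<Longrightarrow> U i k = V i k"
  shows "unitary_nat_mat n U \<longleftrightarrow> unitary_nat_mat n V"
proof -
  have "(\<Sum>j<n. cnj (U j i) * U j k) = (\<Sum>j<n. cnj (V j i) * V j k)"
    if "i < n" "k < n" for i k
    using that assms by (intro sum.cong) auto
  then show ?thesis unfolding unitary_nat_mat_def by simp
qed

lemma unitary_id_nat_mat: "unitary_nat_mat n id_nat_mat"
proof -
  have "cnj (id_nat_mat j i) * id_nat_mat j k = (if j = i then id_nat_mat i k else 0)" for i j k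
    by (simp add: id_nat_mat_def)
  then show ?thesis
    unfolding unitary_nat_mat_def by (simp add: id_nat_mat_def)
qed

lemma lsq_solutions_cong:
  assumes "\<And>i k. i < l \<Longrightarrow> k < l \<Longrightarrow> W i k = W' i k"
  shows "lsq_solutions l m W A h = lsq_solutions l m W' A h"
proof -
  have mat_vec_eq: "mat_vec l W v i = mat_vec l W' v i" if "i < l" for v i
    unfolding mat_vec_def using that assms by (intro sum.cong) auto
  have "vec_norm2 l (mat_vec l W v) = vec_norm2 l (mat_vec l W' v)" for v
    unfolding vec_norm2_def by (intro arg_cong[where f = sqrt] sum.cong) (simp_all add: mat_vec_eq)
  then show ?thesis unfolding lsq_solutions_def by simp
qed

theorem proposition4p1:
  fixes p :: nat and lam :: "nat \<Rightarrow> complex"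
  assumes "p \<ge> 1"
    and "inj_on lam {1..p}"
    and "\<forall>j\<in>{1..p}. Re (lam j) < 0"
    and "\<forall>j\<in>{1..p}. cnj (lam j) \<in> lam ` {1..p}"
  shows "(\<forall>\<omega>::real. cmod (vf_dhat p lam (\<i> * complex_of_real \<omega>)) = 1)
    \<and> (\<forall>(l::nat) (xi::nat \<Rightarrow> complex). (\<forall>i<l. Re (xi i) = 0) \<longrightarrow>
         unitary_nat_mat l (vf_Delta p lam xi)
         \<and> (\<forall>(m::nat) (A::nat \<Rightarrow> nat \<Rightarrow> complex) (h::nat \<Rightarrow> complex).
              lsq_solutions l m (vf_Delta p lam xi) A h = lsq_solutions l m id_nat_mat A h))"
proof (intro conjI allI impI)
  note unimodular = norm_vf_dhat_imaginary[OF assms(2-4)]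
  show "cmod (vf_dhat p lam (\<i> * complex_of_real \<omega>)) = 1" for \<omega>
    by (rule unimodular) simp
  fix l :: nat and xi :: "nat \<Rightarrow> complex"
  assume "\<forall>i<l. Re (xi i) = 0"
  then have Delta_id: "vf_Delta p lam xi i k = id_nat_mat i k" if "i < l" for i k
    using that unimodular by (simp add: vf_Delta_def id_nat_mat_def)
  show "unitary_nat_mat l (vf_Delta p lam xi)"
    by (subst unitary_nat_mat_cong[of l _ id_nat_mat]) (auto simp: Delta_id unitary_id_nat_mat)
  show "lsq_solutions l m (vf_Delta p lam xi) A h = lsq_solutions l m id_nat_mat A h" for m A h
    by (rule lsq_solutions_cong[OF Delta_id])
qed

end
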